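(* For $L\in\{0,1,2,\dots\}$, $0<p<1$ and $r\in\mathbb R_{\ge0}$, let $$\mathcal X(L,p,r):=\mathbb P\!\left(Z_1+\frac{Z_2}{2}+\dots+\frac{Z_L}{2^{L-1}}<r\right),$$ where $Z_1,\dots,Z_L$ are i.i.d. geometric random variables with parameter $p$. Then, with $\lambda:=-\log(1-p)$, $$\mathcal X(L,p,r)\le\mathbb P\big(Y_\infty<(r+3)\lambda\big)+\mathcal N\exp(-2^L\lambda).$$
   Context: A geometric random variable with parameter $p$ takes value $k\in\{0,1,2,\dots\}$ with probability $p(1-p)^k$. Let $W_1,W_2,\dots$ be i.i.d. standard exponential random variables ($\mathbb P(W_i\ge x)=e^{-x}$) and $Y_\infty:=\sum_{i\ge0}W_{i+1}/2^i$. Let $\mathcal N:=\prod_{j\ge1}\frac{2^j}{2^j-1}$. $\log$ is the natural logarithm. *)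

theory Defs
  imports "HOL-Probability.Probability"
begin

text \<open>X(L,p,r) = P(Z_1 + Z_2/2 + ... + Z_L/2^(L-1) < r), Z_i iid geometric(p) on {0,1,..},
  P(Z=k) = p(1-p)^k. Index i<L corresponds to Z_(i+1).\<close>
definition calX :: "nat \<Rightarrow> real \<Rightarrow> real \<Rightarrow> real" where
  "calX L p r = measure_pmf.prob (Pi_pmf {..<L} 0 (\<lambda>_. geometric_pmf p))
      {z. (\<Sum>i<L. real (z i) / 2 ^ i) < r}"

text \<open>Law of iid standard exponentials W_1, W_2, ... (W_(i+1) is coordinate i).\<close>
definition expPi :: "(nat \<Rightarrow> real) measure" where
  "expPi = PiM UNIV (\<lambda>_. density lborel (exponential_density 1))"

definition Yinf :: "(nat \<Rightarrow> real) \<Rightarrow> real" where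
  "Yinf w = (\<Sum>i. w i / 2 ^ i)"

definition calN :: real where
  "calN = prodinf (\<lambda>j. 2 ^ (j+1) / (2 ^ (j+1) - 1))"

end

theory Submission
  imports Defs
begin

text \<open>Put l = -ln(1-p). For a standard exponential W, ceil(W/l) - 1 is geometric with
  parameter p and at least W/l - 1. Building Z_(i+1) in this way from W_(i+1), the event
  Z_1 + ... + Z_L/2^(L-1) < r forces sum_(i<L) W_(i+1)/2^i < (r+2) l, hence Y_infinity < (r+3) l
  unless the tail sum_(i>=L) W_(i+1)/2^i exceeds l. Multiplied by 2^L, the tail is again distributed
  like Y_infinity, and a Chernoff bound with E exp(W/2^i) = 2^i/(2^i-1) for i >= 1, together with the
  exact tail e^(-x) of the term i = 0, gives P(Y_infinity > x) <= N e^(-x).\<close>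

abbreviation Exp1 :: "real measure" where
  "Exp1 \<equiv> density lborel (exponential_density 1)"

lemma prob_space_Exp1: "prob_space Exp1"
  by (rule prob_space_exponential_density) simp

lemma emeasure_Exp1_atMost: "emeasure Exp1 {..a} = ennreal (if 0 \<le> a then 1 - exp (- a) else 0)"
  using emeasure_erlang_density[of 1 0 a] by (simp add: erlang_CDF_def)

lemma emeasure_Exp1_greaterThan:
  assumes "0 \<le> a"
  shows "emeasure Exp1 {a<..} = ennreal (exp (- a))"
proof -
  interpret prob_space Exp1 by (rule prob_space_Exp1)
  have "{a<..} = space Exp1 - {..a}" by auto
  then have "emeasure Exp1 {a<..} = emeasure Exp1 (space Exp1) - emeasure Exp1 {..a}"
    by (simp add: emeasure_Diff)
  also have "\<dots> = ennreal 1 - ennreal (1 - exp (- a))"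
    using assms emeasure_space_1 by (simp add: emeasure_Exp1_atMost)
  also have "\<dots> = ennreal (exp (- a))"
    using assms by (subst ennreal_minus) auto
  finally show ?thesis .
qed

lemma emeasure_Exp1_greaterThanAtMost:
  assumes "0 \<le> a" "a \<le> b"
  shows "emeasure Exp1 {a<..b} = ennreal (exp (- a) - exp (- b))"
proof -
  have "{a<..b} = {a<..} - {b<..}" by auto
  then have "emeasure Exp1 {a<..b} = emeasure Exp1 {a<..} - emeasure Exp1 {b<..}"
    using assms by (simp, intro emeasure_Diff) (auto simp: emeasure_Exp1_greaterThan)
  also have "\<dots> = ennreal (exp (- a) - exp (- b))"
    using assms by (simp add: emeasure_Exp1_greaterThan ennreal_minus)
  finally show ?thesis .
qed

lemma emeasure_Exp1_max_gt: "emeasure Exp1 {y. a < max 0 y} \<le> ennreal (exp (- a))"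
proof (cases "0 \<le> a")
  case True
  then have "{y. a < max 0 y} = {a<..}" by auto
  then show ?thesis using emeasure_Exp1_greaterThan[OF True] by simp
next
  case False
  interpret prob_space Exp1 by (rule prob_space_Exp1)
  have "emeasure Exp1 {y. a < max 0 y} \<le> 1" by (rule emeasure_le_1)
  also have "1 \<le> ennreal (exp (- a))" using False by simp
  finally show ?thesis .
qed

lemma nn_integral_Exp1_exp:
  assumes "0 \<le> s" "s < 1"
  shows "(\<integral>\<^sup>+ y. ennreal (exp (s * max 0 y)) \<partial>Exp1) = ennreal (1 / (1 - s))"
proof -
  have density: "exponential_density 1 y * exp (s * max 0 y)
      = 1 / (1 - s) * exponential_density (1 - s) y" for y :: real
    using assms by (cases "y < 0") (simp_all add: exponential_density_def field_simps flip: exp_add)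
  have "(\<integral>\<^sup>+ y. ennreal (exp (s * max 0 y)) \<partial>Exp1) =
      (\<integral>\<^sup>+ y. ennreal (exponential_density 1 y) * ennreal (exp (s * max 0 y)) \<partial>lborel)"
    by (rule nn_integral_density) auto
  also have "\<dots> = (\<integral>\<^sup>+ y. ennreal (1 / (1 - s)) * ennreal (exponential_density (1 - s) y) \<partial>lborel)"
    using assms by (intro nn_integral_cong)
      (simp add: density exponential_density_nonneg flip: ennreal_mult ennreal_mult')
  also have "\<dots> = ennreal (1 / (1 - s)) *
      emeasure (density lborel (exponential_density (1 - s))) UNIV"
    by (subst nn_integral_cmult) (auto simp: emeasure_density)
  also have "\<dots> = ennreal (1 / (1 - s))"
    using assms prob_space.emeasure_space_1[OF prob_space_exponential_density[of "1 - s"]] by simp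
  finally show ?thesis .
qed

definition geom_of_exp :: "real \<Rightarrow> real \<Rightarrow> nat" where
  "geom_of_exp l x = nat (\<lceil>x / l\<rceil> - 1)"

lemma measurable_geom_of_exp [measurable]: "geom_of_exp l \<in> borel \<rightarrow>\<^sub>M count_space UNIV"
  unfolding geom_of_exp_def by measurable

lemma geom_of_exp_ge:
  assumes "0 < l"
  shows "x / l - 1 \<le> real (geom_of_exp l x)"
  using le_of_int_ceiling[of "x / l"] unfolding geom_of_exp_def by linarith

lemma geom_of_exp_eq_0_iff:
  assumes "0 < l"
  shows "geom_of_exp l x = 0 \<longleftrightarrow> x \<le> l"
  using assms by (auto simp: geom_of_exp_def ceiling_le_iff pos_divide_le_eq)

lemma geom_of_exp_eq_Suc_iff:
  assumes "0 < l"
  shows "geom_of_exp l x = Suc k \<longleftrightarrow> x \<in> {real (Suc k) * l<..real (Suc (Suc k)) * l}"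
proof -
  have "geom_of_exp l x = Suc k \<longleftrightarrow> \<lceil>x / l\<rceil> = int (Suc k) + 1"
    by (auto simp: geom_of_exp_def)
  also have "\<dots> \<longleftrightarrow> real (Suc k) < x / l \<and> x / l \<le> real (Suc k) + 1"
    by (simp add: ceiling_eq_iff)
  finally show ?thesis
    using assms by (simp add: pos_less_divide_eq pos_divide_le_eq algebra_simps)
qed

lemma distr_Exp1_geom_of_exp:
  assumes p: "0 < p" "p < 1"
  shows "distr Exp1 (count_space UNIV) (geom_of_exp (- ln (1 - p))) = measure_pmf (geometric_pmf p)"
proof (rule measure_eqI_countable[where A = UNIV])
  define l where "l = - ln (1 - p)"
  have l: "0 < l" and exp_l: "exp (- l) = 1 - p"
    using p by (simp_all add: l_def)
  have exp_kl: "exp (- (real k * l)) = (1 - p) ^ k" for k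
    using p by (simp add: l_def exp_of_nat_mult)
  fix k :: nat
  have "emeasure Exp1 (geom_of_exp l -` {k}) = ennreal ((1 - p) ^ k * p)"
  proof (cases k)
    case 0
    then have "geom_of_exp l -` {k} = {..l}"
      using geom_of_exp_eq_0_iff[OF l] by auto
    then show ?thesis
      using 0 l exp_l by (simp add: emeasure_Exp1_atMost)
  next
    case (Suc j)
    then have "geom_of_exp l -` {k} = {real k * l<..real (Suc k) * l}"
      using geom_of_exp_eq_Suc_iff[OF l] by auto
    moreover have "exp (- (real k * l)) - exp (- (real (Suc k) * l)) = (1 - p) ^ k * p"
      using exp_kl[of k] exp_kl[of "Suc k"] by (simp add: algebra_simps)
    ultimately show ?thesis
      using l by (simp add: emeasure_Exp1_greaterThanAtMost)
  qed
  then show "emeasure (distr Exp1 (count_space UNIV) (geom_of_exp (- ln (1 - p)))) {k} =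
      emeasure (measure_pmf (geometric_pmf p)) {k}"
    using p by (simp add: emeasure_distr l_def emeasure_pmf_single pmf_geometric)
qed auto

lemma distr_Pi_pmf_PiM:
  assumes fin: "finite I"
  shows "distr (Pi_pmf I d q) (PiM I (\<lambda>_. count_space UNIV)) (\<lambda>x. restrict x I)
         = PiM I (\<lambda>i. measure_pmf (q i))"
proof (rule product_sigma_finite.PiM_eqI)
  show "product_sigma_finite (\<lambda>i. measure_pmf (q i))"
    by (intro product_prob_space.axioms(1) product_prob_spaceI) (rule measure_pmf.prob_space_axioms)
  show "sets (distr (Pi_pmf I d q) (PiM I (\<lambda>_. count_space UNIV)) (\<lambda>x. restrict x I))
        = sets (PiM I (\<lambda>i. measure_pmf (q i)))"
    by (simp, intro sets_PiM_cong) simp_all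
  fix A assume A: "\<And>i. i \<in> I \<Longrightarrow> A i \<in> sets (measure_pmf (q i))"
  have "Pi\<^sub>E I A \<in> sets (PiM I (\<lambda>_. count_space UNIV))"
    using A by (intro sets_PiM_I_finite fin) auto
  then have "emeasure (distr (Pi_pmf I d q) (PiM I (\<lambda>_. count_space UNIV)) (\<lambda>x. restrict x I))
      (Pi\<^sub>E I A) = emeasure (Pi_pmf I d q) ((\<lambda>x. restrict x I) -` Pi\<^sub>E I A)"
    by (subst emeasure_distr) (auto simp: space_PiM)
  also have "\<dots> = emeasure (Pi_pmf I d q) (PiE_dflt I d A)"
    by (intro emeasure_eq_AE AE_pmfI) (auto simp: PiE_dflt_def set_Pi_pmf fin)
  also have "\<dots> = (\<Prod>i\<in>I. emeasure (measure_pmf (q i)) (A i))"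
    by (simp add: measure_pmf.emeasure_eq_measure measure_Pi_pmf_PiE_dflt fin prod_ennreal)
  finally show "emeasure (distr (Pi_pmf I d q) (PiM I (\<lambda>_. count_space UNIV)) (\<lambda>x. restrict x I))
      (Pi\<^sub>E I A) = (\<Prod>i\<in>I. emeasure (measure_pmf (q i)) (A i))" .
qed (rule fin)

lemma prob_space_expPi: "prob_space expPi"
  unfolding expPi_def by (intro prob_space_PiM prob_space_Exp1)

lemma measure_expPi_reindex:
  assumes "inj_on f I" and T: "T \<in> sets (PiM I (\<lambda>_. Exp1))"
  shows "measure expPi {w \<in> space expPi. (\<lambda>i\<in>I. w (f i)) \<in> T} = measure (PiM I (\<lambda>_. Exp1)) T"
proof -
  have "PiM I (\<lambda>_. Exp1) = distr expPi (PiM I (\<lambda>_. Exp1)) (\<lambda>w. \<lambda>i\<in>I. w (f i))"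
    unfolding expPi_def using assms(1)
    by (intro distr_PiM_reindex[symmetric]) (auto simp: prob_space_Exp1)
  also have "measure \<dots> T = measure expPi ((\<lambda>w. \<lambda>i\<in>I. w (f i)) -` T \<inter> space expPi)"
    using T by (intro measure_distr) (auto simp: expPi_def intro!: measurable_restrict)
  finally show ?thesis
    by (simp add: vimage_def Collect_conj_eq Int_commute restrict_def)
qed

lemma PiM_geometric_eq_distr_PiM_Exp1:
  assumes p: "0 < p" "p < 1" and "finite I"
  defines "G \<equiv> measure_pmf (geometric_pmf p)" and "\<phi> \<equiv> geom_of_exp (- ln (1 - p))"
  shows "PiM I (\<lambda>_. G) = distr (PiM I (\<lambda>_. Exp1)) (PiM I (\<lambda>_. G)) (compose I \<phi>)"
proof -
  have "distr Exp1 G \<phi> = distr Exp1 (count_space UNIV) \<phi>"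
    by (intro distr_cong) (auto simp: G_def)
  also have "\<dots> = G"
    using distr_Exp1_geom_of_exp[OF p] by (simp add: G_def \<phi>_def)
  finally have "PiM I (\<lambda>_. G) = PiM I (\<lambda>_. distr Exp1 G \<phi>)"
    by simp
  also have "\<dots> = distr (PiM I (\<lambda>_. Exp1)) (PiM I (\<lambda>_. G)) (compose I \<phi>)"
    using measurable_geom_of_exp \<open>finite I\<close> unfolding \<phi>_def
    by (intro distr_PiM_finite_prob_space'[symmetric])
      (auto simp: G_def prob_space_Exp1 measure_pmf.prob_space_axioms measurable_def)
  finally show ?thesis .
qed

lemma calX_eq_measure_expPi:
  assumes p: "0 < p" "p < 1"
  shows "calX L p r =
    measure expPi {w \<in> space expPi. (\<Sum>i<L. real (geom_of_exp (- ln (1 - p)) (w i)) / 2 ^ i) < r}"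
proof -
  define I where "I = {..<L}"
  define \<phi> where "\<phi> = geom_of_exp (- ln (1 - p))"
  define G where "G = measure_pmf (geometric_pmf p)"
  define S where "S = {g \<in> space (PiM I (\<lambda>_. G)). (\<Sum>i<L. real (g i) / 2 ^ i) < r}"
  have [measurable]: "\<phi> \<in> Exp1 \<rightarrow>\<^sub>M G"
    using measurable_geom_of_exp by (simp add: \<phi>_def G_def measurable_def)
  have [measurable]: "compose I \<phi> \<in> PiM I (\<lambda>_. Exp1) \<rightarrow>\<^sub>M PiM I (\<lambda>_. G)"
    unfolding compose_def by measurable
  have S: "S \<in> sets (PiM I (\<lambda>_. G))"
    by (simp add: sets_PiM_cong[of I I "\<lambda>_. G" "\<lambda>_. count_space UNIV"] G_def)
      (simp add: S_def I_def G_def)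
  have "calX L p r = measure
      (distr (Pi_pmf I 0 (\<lambda>_. geometric_pmf p)) (PiM I (\<lambda>_. count_space UNIV)) (\<lambda>x. restrict x I)) S"
    unfolding calX_def I_def S_def G_def
    by (subst measure_distr) (auto simp: space_PiM intro!: arg_cong2[where f = measure])
  also have "\<dots> = measure (distr (PiM I (\<lambda>_. Exp1)) (PiM I (\<lambda>_. G)) (compose I \<phi>)) S"
    using PiM_geometric_eq_distr_PiM_Exp1[OF p, of I]
    by (simp add: distr_Pi_pmf_PiM I_def G_def \<phi>_def)
  also have "\<dots> = measure (PiM I (\<lambda>_. Exp1)) (compose I \<phi> -` S \<inter> space (PiM I (\<lambda>_. Exp1)))"
    using S by (intro measure_distr) auto
  also have "\<dots> = measure expPi
      {w \<in> space expPi. (\<lambda>i\<in>I. w (id i)) \<in> compose I \<phi> -` S \<inter> space (PiM I (\<lambda>_. Exp1))}"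
    using S by (intro measure_expPi_reindex[symmetric]) auto
  also have "{w \<in> space expPi. (\<lambda>i\<in>I. w (id i)) \<in> compose I \<phi> -` S \<inter> space (PiM I (\<lambda>_. Exp1))}
      = {w \<in> space expPi. (\<Sum>i<L. real (\<phi> (w i)) / 2 ^ i) < r}"
    by (auto simp: S_def I_def G_def compose_def space_PiM)
  finally show ?thesis
    by (simp add: \<phi>_def)
qed

definition calN_factor :: "nat \<Rightarrow> real" where
  "calN_factor j = 2 ^ (j + 1) / (2 ^ (j + 1) - 1)"

lemma calN_factor_eq: "calN_factor j = 1 + 1 / (2 ^ (j + 1) - 1)"
proof -
  have "a / (a - 1) = 1 + 1 / (a - 1)" if "a \<noteq> 1" for a :: real
    using that by (simp add: field_simps)
  moreover have "(2::real) ^ (j + 1) \<noteq> 1"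
    using one_less_power[of "2::real" "j + 1"] by linarith
  ultimately show ?thesis unfolding calN_factor_def by blast
qed

lemma calN_factor_ge_1: "1 \<le> calN_factor j"
  using one_le_power[of "2::real" "j + 1"] by (simp add: calN_factor_eq)

lemma calN_factor_pos: "0 < calN_factor j"
  using calN_factor_ge_1[of j] by linarith

lemma convergent_prod_calN_factor: "convergent_prod calN_factor"
proof (intro abs_convergent_prod_imp_convergent_prod summable_imp_abs_convergent_prod)
  have "norm (calN_factor i - 1) \<le> (1 / 2) ^ i" for i
  proof -
    have "(2::real) ^ i \<le> 2 ^ (i + 1) - 1" using one_le_power[of "2::real" i] by simp
    then have "1 / (2 ^ (i + 1) - 1) \<le> 1 / (2::real) ^ i"
      by (intro frac_le) auto
    then show ?thesis using calN_factor_ge_1[of i] by (simp add: calN_factor_eq power_one_over)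
  qed
  then show "summable (\<lambda>i. norm (calN_factor i - 1))"
    using summable_comparison_test[of "\<lambda>i. norm (calN_factor i - 1)" "\<lambda>i. (1 / 2::real) ^ i"]
    by (simp add: summable_geometric)
qed

lemma prod_calN_factor_le_calN: "(\<Prod>j<m. calN_factor j) \<le> calN"
proof -
  have "(\<Prod>j<m. calN_factor j) \<le> prodinf calN_factor"
    using convergent_prod_calN_factor calN_factor_ge_1 calN_factor_pos
    by (intro prod_le_prodinf) (auto intro: less_imp_le)
  also have "prodinf calN_factor = calN"
    unfolding calN_def calN_factor_def ..
  finally show ?thesis .
qed

lemma calN_factor_eq_inverse: "calN_factor j = 1 / (1 - 1 / 2 ^ (j + 1))"
proof -
  have "(1::real) < 2 ^ (j + 1)" by (rule one_less_power) auto
  then show ?thesis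
    unfolding calN_factor_def by (simp add: field_simps del: power_Suc)
qed

text \<open>The coordinate 0 enters with weight 1, where the moment generating function of Exp1 blows
  up; it is integrated out exactly instead.\<close>

lemma Chernoff_PiM_Exp1:
  assumes J: "finite J" "0 \<notin> J"
  shows "emeasure (PiM (insert 0 J) (\<lambda>_. Exp1))
      {v \<in> space (PiM (insert 0 J) (\<lambda>_. Exp1)). x < max 0 (v 0) + (\<Sum>i\<in>J. c i * max 0 (v i))}
    \<le> ennreal (exp (- x)) * (\<Prod>i\<in>J. \<integral>\<^sup>+ y. ennreal (exp (c i * max 0 y)) \<partial>Exp1)"
    (is "emeasure _ ?S \<le> _")
proof -
  interpret product_prob_space "\<lambda>_. Exp1" by (intro product_prob_spaceI prob_space_Exp1)
  define \<psi> where "\<psi> i y = ennreal (exp (c i * max 0 y))" for i y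
  have [measurable]: "\<psi> i \<in> borel_measurable Exp1" for i
    unfolding \<psi>_def by measurable
  have section_bound:
      "(\<integral>\<^sup>+ y. indicator ?S (v(0 := y)) \<partial>Exp1) \<le> ennreal (exp (- x)) * (\<Prod>i\<in>J. \<psi> i (v i))"
    if v: "v \<in> space (PiM J (\<lambda>_. Exp1))" for v
  proof -
    define V where "V = (\<Sum>i\<in>J. c i * max 0 (v i))"
    have "v(0 := y) \<in> space (PiM (insert 0 J) (\<lambda>_. Exp1))" for y
      using v J by (auto simp: space_PiM PiE_def extensional_def)
    moreover have "(\<Sum>i\<in>J. c i * max 0 ((v(0 := y)) i)) = V" for y
      using J by (auto simp: V_def intro: sum.cong)
    ultimately have indicator_section:
        "indicator ?S (v(0 := y)) = indicator {y. x - V < max 0 y} y" for y :: real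
      by (simp add: indicator_def algebra_simps)
    have "(\<integral>\<^sup>+ y. indicator ?S (v(0 := y)) \<partial>Exp1) = (\<integral>\<^sup>+ y. indicator {y. x - V < max 0 y} y \<partial>Exp1)"
      by (intro nn_integral_cong) (rule indicator_section)
    also have "\<dots> = emeasure Exp1 {y. x - V < max 0 y}"
      by (rule nn_integral_indicator) simp
    also have "\<dots> \<le> ennreal (exp (- x) * exp V)"
      using emeasure_Exp1_max_gt[of "x - V"] by (simp add: mult_exp_exp)
    also have "\<dots> = ennreal (exp (- x)) * (\<Prod>i\<in>J. \<psi> i (v i))"
      using J by (simp add: V_def \<psi>_def exp_sum ennreal_mult prod_ennreal prod_nonneg)
    finally show ?thesis .
  qed
  have "emeasure (PiM (insert 0 J) (\<lambda>_. Exp1)) ?S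
      = (\<integral>\<^sup>+ v. indicator ?S v \<partial>PiM (insert 0 J) (\<lambda>_. Exp1))"
    by simp
  also have "\<dots> = (\<integral>\<^sup>+ v. (\<integral>\<^sup>+ y. indicator ?S (v(0 := y)) \<partial>Exp1) \<partial>PiM J (\<lambda>_. Exp1))"
    using J by (intro product_nn_integral_insert) auto
  also have "\<dots> \<le> (\<integral>\<^sup>+ v. ennreal (exp (- x)) * (\<Prod>i\<in>J. \<psi> i (v i)) \<partial>PiM J (\<lambda>_. Exp1))"
    by (intro nn_integral_mono section_bound)
  also have "\<dots> = ennreal (exp (- x)) * (\<Prod>i\<in>J. \<integral>\<^sup>+ y. \<psi> i y \<partial>Exp1)"
    using J by (simp add: nn_integral_cmult product_nn_integral_prod)
  finally show ?thesis
    by (simp add: \<psi>_def)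
qed

lemma emeasure_PiM_Exp1_weighted_sum_gt:
  "emeasure (PiM {..<Suc m} (\<lambda>_. Exp1))
      {v \<in> space (PiM {..<Suc m} (\<lambda>_. Exp1)). x < (\<Sum>i<Suc m. max 0 (v i) / 2 ^ i)}
    \<le> ennreal (exp (- x) * (\<Prod>j<m. calN_factor j))"
proof -
  define J where "J = Suc ` {..<m}"
  have J: "finite J" "0 \<notin> J" "{..<Suc m} = insert 0 J"
    by (auto simp: J_def lessThan_Suc_eq_insert_0)
  have "(\<Sum>i<Suc m. max 0 (v i) / 2 ^ i) = max 0 (v 0) + (\<Sum>i\<in>J. 1 / 2 ^ i * max 0 (v i))"
    for v :: "nat \<Rightarrow> real"
    using J by simp
  then have "emeasure (PiM {..<Suc m} (\<lambda>_. Exp1))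
      {v \<in> space (PiM {..<Suc m} (\<lambda>_. Exp1)). x < (\<Sum>i<Suc m. max 0 (v i) / 2 ^ i)}
    \<le> ennreal (exp (- x)) * (\<Prod>i\<in>J. \<integral>\<^sup>+ y. ennreal (exp (1 / 2 ^ i * max 0 y)) \<partial>Exp1)"
    using Chernoff_PiM_Exp1[OF J(1,2), of x "\<lambda>i. 1 / 2 ^ i"] by (simp only: J(3))
  also have "(\<Prod>i\<in>J. \<integral>\<^sup>+ y. ennreal (exp (1 / 2 ^ i * max 0 y)) \<partial>Exp1)
      = (\<Prod>j<m. ennreal (calN_factor j))"
  proof -
    have "(\<integral>\<^sup>+ y. ennreal (exp (1 / 2 ^ Suc j * max 0 y)) \<partial>Exp1) = ennreal (calN_factor j)" for j
      unfolding calN_factor_eq_inverse Suc_eq_plus1 using one_less_power[of "2::real" "j + 1"]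
      by (intro nn_integral_Exp1_exp) auto
    then show ?thesis
      unfolding J_def by (simp only: prod.reindex inj_Suc inj_on_subset o_def subset_UNIV)
  qed
  finally show ?thesis
    by (simp add: ennreal_mult prod_ennreal prod_nonneg less_imp_le[OF calN_factor_pos])
qed

lemma nn_integral_Exp1_abs: "(\<integral>\<^sup>+ y. ennreal \<bar>y\<bar> \<partial>Exp1) = 1"
proof -
  have "(\<integral>\<^sup>+ y. ennreal \<bar>y\<bar> \<partial>Exp1) = (\<integral>\<^sup>+ y. ennreal (exponential_density 1 y) * ennreal \<bar>y\<bar> \<partial>lborel)"
    by (rule nn_integral_density) auto
  also have "\<dots> = (\<integral>\<^sup>+ y. ennreal (erlang_density 0 1 y * y ^ 1) \<partial>lborel)"
    by (intro nn_integral_cong) (auto simp: erlang_density_def ennreal_mult'[symmetric])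
  also have "\<dots> = 1"
    using nn_integral_erlang_ith_moment[of 1 0 1] by simp
  finally show ?thesis .
qed

lemma nn_integral_expPi_component:
  assumes [measurable]: "g \<in> borel_measurable borel"
  shows "(\<integral>\<^sup>+ w. g (w i) \<partial>expPi) = (\<integral>\<^sup>+ y. g y \<partial>Exp1)"
proof -
  have "(\<integral>\<^sup>+ y. g y \<partial>Exp1) = (\<integral>\<^sup>+ y. g y \<partial>distr expPi Exp1 (\<lambda>w. w i))"
    unfolding expPi_def by (subst distr_PiM_component) (auto simp: prob_space_Exp1)
  also have "\<dots> = (\<integral>\<^sup>+ w. g (w i) \<partial>expPi)"
    by (rule nn_integral_distr) (auto simp: expPi_def)
  finally show ?thesis ..
qed

text \<open>The value of \<open>suminf\<close> on a divergent series is unspecified, so splitting \<open>Yinf\<close> into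
  head and tail needs summability, which holds almost surely.\<close>

lemma AE_expPi_summable: "AE w in expPi. summable (\<lambda>i. w i / 2 ^ i)"
proof -
  have "(\<integral>\<^sup>+ w. (\<Sum>i. ennreal (\<bar>w i\<bar> / 2 ^ i)) \<partial>expPi) = (\<Sum>i. \<integral>\<^sup>+ w. ennreal (\<bar>w i\<bar> / 2 ^ i) \<partial>expPi)"
    by (rule nn_integral_suminf) (auto simp: expPi_def)
  also have "\<dots> = (\<Sum>i. ennreal ((1 / 2) ^ i))"
  proof (intro suminf_cong)
    fix i :: nat
    have "(\<integral>\<^sup>+ w. ennreal (\<bar>w i\<bar> / 2 ^ i) \<partial>expPi) = (\<integral>\<^sup>+ y. ennreal (1 / 2 ^ i) * ennreal \<bar>y\<bar> \<partial>Exp1)"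
      by (subst nn_integral_expPi_component)
        (simp_all add: ennreal_mult'[symmetric])
    also have "\<dots> = ennreal ((1 / 2) ^ i)"
      by (simp add: nn_integral_cmult nn_integral_Exp1_abs power_one_over)
    finally show "(\<integral>\<^sup>+ w. ennreal (\<bar>w i\<bar> / 2 ^ i) \<partial>expPi) = ennreal ((1 / 2) ^ i)" .
  qed
  also have "\<dots> = ennreal 2"
    using geometric_sums[of "1 / 2 :: real"] by (intro suminf_ennreal_eq) auto
  finally have "AE w in expPi. (\<Sum>i. ennreal (\<bar>w i\<bar> / 2 ^ i)) \<noteq> \<infinity>"
    by (intro nn_integral_noteq_infinite) (auto simp: expPi_def)
  then show ?thesis
  proof (rule AE_mp, intro AE_I2 impI)
    fix w :: "nat \<Rightarrow> real"
    assume "(\<Sum>i. ennreal (\<bar>w i\<bar> / 2 ^ i)) \<noteq> \<infinity>"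
    then have "summable (\<lambda>i. \<bar>w i / 2 ^ i\<bar>)"
      by (intro summable_suminf_not_top) auto
    then show "summable (\<lambda>i. w i / 2 ^ i)"
      by (rule summable_rabs_cancel)
  qed
qed

lemma measure_expPi_shifted_weighted_sum_gt:
  assumes "0 < n"
  shows "measure expPi {w \<in> space expPi. x < (\<Sum>i<n. max 0 (w (L + i)) / 2 ^ i)} \<le> calN * exp (- x)"
proof -
  obtain m where n: "n = Suc m" using assms gr0_implies_Suc by blast
  define T where "T = {v \<in> space (PiM {..<n} (\<lambda>_. Exp1)). x < (\<Sum>i<n. max 0 (v i) / 2 ^ i)}"
  have T: "T \<in> sets (PiM {..<n} (\<lambda>_. Exp1))"
    unfolding T_def by measurable
  have "measure expPi {w \<in> space expPi. x < (\<Sum>i<n. max 0 (w (L + i)) / 2 ^ i)}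
      = measure expPi {w \<in> space expPi. (\<lambda>i\<in>{..<n}. w (L + i)) \<in> T}"
    by (simp add: T_def space_PiM)
  also have "\<dots> = measure (PiM {..<n} (\<lambda>_. Exp1)) T"
    using T by (intro measure_expPi_reindex) auto
  also have "\<dots> \<le> exp (- x) * (\<Prod>j<m. calN_factor j)"
    unfolding measure_def using emeasure_PiM_Exp1_weighted_sum_gt[of m x]
    by (intro enn2real_leI) (simp_all add: T_def n prod_nonneg less_imp_le[OF calN_factor_pos])
  also have "\<dots> \<le> calN * exp (- x)"
    using prod_calN_factor_le_calN[of m] by (simp add: mult.commute)
  finally show ?thesis .
qed

lemma measure_expPi_tail_gt:
  assumes l: "0 < l"
  shows "measure expPi {w \<in> space expPi. l < (\<Sum>i. w (i + L) / 2 ^ (i + L))}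
    \<le> calN * exp (- (2 ^ L * l))" (is "measure _ ?E \<le> _")
proof -
  interpret prob_space expPi by (rule prob_space_expPi)
  define C where "C n = {w \<in> space expPi. 2 ^ L * l < (\<Sum>i<n. max 0 (w (L + i)) / 2 ^ i)}" for n
  have C_sets: "C n \<in> sets expPi" for n
    unfolding C_def expPi_def by measurable
  have "incseq C"
    by (intro incseq_SucI) (auto simp: C_def intro: order.strict_trans2)
  have tail_in_C: "w \<in> (\<Union>n. C n)"
    if w: "w \<in> ?E" and "summable (\<lambda>i. w i / 2 ^ i)" for w
  proof -
    define f where "f = (\<lambda>i. w (i + L) / 2 ^ (i + L))"
    have "summable f"
      using \<open>summable (\<lambda>i. w i / 2 ^ i)\<close> unfolding f_def by (subst summable_iff_shift)
    then have "(\<lambda>n. \<Sum>i<n. f i) \<longlonglongrightarrow> suminf f"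
      by (rule summable_LIMSEQ)
    moreover have "l < suminf f"
      using w by (simp add: f_def)
    ultimately have "eventually (\<lambda>n. l < (\<Sum>i<n. f i)) sequentially"
      by (rule order_tendstoD(1))
    then obtain n where n: "l < (\<Sum>i<n. f i)"
      by (auto simp: eventually_sequentially)
    have "2 ^ L * l < 2 ^ L * (\<Sum>i<n. f i)" using n by simp
    also have "\<dots> = (\<Sum>i<n. w (L + i) / 2 ^ i)"
      by (simp add: f_def sum_distrib_left power_add add.commute)
    also have "\<dots> \<le> (\<Sum>i<n. max 0 (w (L + i)) / 2 ^ i)"
      by (intro sum_mono divide_right_mono) auto
    finally show ?thesis using w by (auto simp: C_def)
  qed
  then have "AE w in expPi. w \<in> ?E \<longrightarrow> w \<in> (\<Union>n. C n)"
    using AE_expPi_summable by eventually_elim (use tail_in_C in blast)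
  then have "measure expPi ?E \<le> measure expPi (\<Union>n. C n)"
    using C_sets by (intro finite_measure_mono_AE) auto
  also have "\<dots> \<le> calN * exp (- (2 ^ L * l))"
  proof (rule LIMSEQ_le_const2)
    show "(\<lambda>n. measure expPi (C n)) \<longlonglongrightarrow> measure expPi (\<Union>n. C n)"
      using C_sets \<open>incseq C\<close> by (intro finite_Lim_measure_incseq) auto
    show "\<exists>N. \<forall>n\<ge>N. measure expPi (C n) \<le> calN * exp (- (2 ^ L * l))"
      unfolding C_def by (intro exI[of _ 1] allI impI measure_expPi_shifted_weighted_sum_gt) auto
  qed
  finally show ?thesis .
qed
lemma weighted_sum_lt_of_geom_of_exp_sum_lt:
  assumes l: "0 < l" and r: "(\<Sum>i<L. real (geom_of_exp l (w i)) / 2 ^ i) < r"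
  shows "(\<Sum>i<L. w i / 2 ^ i) < (r + 2) * l"
proof -
  have "(\<Sum>i<L. (1 / 2 :: real) ^ i) \<le> (\<Sum>i. (1 / 2) ^ i)"
    by (intro sum_le_suminf) (auto simp: summable_geometric)
  then have "(\<Sum>i<L. w i / 2 ^ i) / l - 2 \<le> (\<Sum>i<L. w i / 2 ^ i) / l - (\<Sum>i<L. (1 / 2) ^ i)"
    using suminf_geometric[of "1 / 2 :: real"] by simp
  also have "\<dots> = (\<Sum>i<L. (w i / l - 1) / 2 ^ i)"
    by (simp add: sum_divide_distrib sum_subtractf diff_divide_distrib power_one_over mult.commute)
  also have "\<dots> \<le> (\<Sum>i<L. real (geom_of_exp l (w i)) / 2 ^ i)"
    by (intro sum_mono divide_right_mono geom_of_exp_ge l) simp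
  finally have "(\<Sum>i<L. w i / 2 ^ i) / l < r + 2"
    using r by linarith
  then show ?thesis
    using l by (simp add: divide_less_eq)
qed

theorem lemma15:
  fixes L :: nat and p r :: real
  assumes "0 < p" "p < 1" "0 \<le> r"
  shows "calX L p r \<le>
    measure expPi {w \<in> space expPi. Yinf w < (r + 3) * (- ln (1 - p))}
    + calN * exp (- (2 ^ L) * (- ln (1 - p)))"
proof -
  interpret prob_space expPi by (rule prob_space_expPi)
  define l where "l = - ln (1 - p)"
  have l: "0 < l" using assms by (simp add: l_def)
  define A where "A = {w \<in> space expPi. (\<Sum>i<L. real (geom_of_exp l (w i)) / 2 ^ i) < r}"
  define B where "B = {w \<in> space expPi. Yinf w < (r + 3) * l}"
  define C where "C = {w \<in> space expPi. l < (\<Sum>i. w (i + L) / 2 ^ (i + L))}"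
  have [measurable]: "B \<in> sets expPi" "C \<in> sets expPi"
    unfolding B_def C_def Yinf_def expPi_def by measurable
  have "w \<in> B \<union> C" if "w \<in> A" "summable (\<lambda>i. w i / 2 ^ i)" for w
  proof -
    have "Yinf w = (\<Sum>i. w (i + L) / 2 ^ (i + L)) + (\<Sum>i<L. w i / 2 ^ i)"
      unfolding Yinf_def by (rule suminf_split_initial_segment[OF that(2)])
    moreover have "(\<Sum>i<L. w i / 2 ^ i) < (r + 2) * l"
      using that(1) by (intro weighted_sum_lt_of_geom_of_exp_sum_lt l) (simp add: A_def)
    ultimately show ?thesis
      using that(1) by (auto simp: A_def B_def C_def algebra_simps)
  qed
  then have "AE w in expPi. w \<in> A \<longrightarrow> w \<in> B \<union> C"
    using AE_expPi_summable by auto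
  then have "calX L p r \<le> measure expPi (B \<union> C)"
    using assms by (simp add: calX_eq_measure_expPi A_def l_def finite_measure_mono_AE)
  also have "\<dots> \<le> measure expPi B + measure expPi C"
    by (rule measure_Un_le) simp_all
  also have "measure expPi C \<le> calN * exp (- (2 ^ L * l))"
    unfolding C_def by (rule measure_expPi_tail_gt[OF l])
  finally show ?thesis
    by (simp add: B_def l_def)
qed

end
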